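(* Let $(\mathcal C,\otimes,I)$ be a symmetric monoidal category and $M$ a commutative monad on $\mathcal C$. Then every symmetric Eilenberg--Moore $M$-monoid is an Eilenberg--Moore $M$-monoid.
   Context: Symmetry is $\mathsf{sym}: X\otimes Y\to Y\otimes X$. $M$ is a strong monad with (right) strength $\tau_{X,Y}: MX\otimes Y\to M(X\otimes Y)$ satisfying the usual laws; its left strength is $\tau'_{X,Y}=M\mathsf{sym}\circ\tau_{Y,X}\circ\mathsf{sym}: X\otimes MY\to M(X\otimes Y)$. $M$ is commutative if $\mu\circ M\tau\circ\tau' = \mu\circ M\tau'\circ\tau: MX\otimes MY\to M(X\otimes Y)$ for all $X,Y$. A symmetric Eilenberg--Moore $M$-monoid is a tuple $\langle A,a: MA\to A,m: A\otimes A\to A,u: I\to A\rangle$ such that $\langle A,a\rangle$ is an Eilenberg--Moore $M$-algebra, $\langle A,m,u\rangle$ is a monoid, and $a\circ Mm\circ\mu_{A\otimes A}\circ M\tau'_{A,A}\circ\tau_{A,MA} = m\circ(a\otimes a): MA\otimes MA\to A$. An Eilenberg--Moore $M$-monoid is a tuple $\langle A,a,m,u\rangle$ such that $\langle A,a\rangle$ is an Eilenberg--Moore $M$-algebra, $\langle A,m,u\rangle$ is a monoid, and $m\circ(a\otimes \mathrm{id}_A)=a\circ Mm\circ\tau_{A,A}: MA\otimes A\to A$. *)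

theory Defs
  imports Main
begin

text \<open>A (small-data) category with a tensor product, presented by its object set,
arrow set, domain/codomain, identities, composition (Cmp C g f = g after f),
tensor on objects and arrows, unit object, associator, left/right unitors and
symmetry.\<close>

record ('o, 'a) smcat =
  Ob :: "'o set"
  Ar :: "'a set"
  Dom :: "'a \<Rightarrow> 'o"
  Cod :: "'a \<Rightarrow> 'o"
  Idm :: "'o \<Rightarrow> 'a"
  Cmp :: "'a \<Rightarrow> 'a \<Rightarrow> 'a"
  Tob :: "'o \<Rightarrow> 'o \<Rightarrow> 'o"
  Tar :: "'a \<Rightarrow> 'a \<Rightarrow> 'a"
  Unit :: "'o"
  Assoc :: "'o \<Rightarrow> 'o \<Rightarrow> 'o \<Rightarrow> 'a"
  Lunit :: "'o \<Rightarrow> 'a"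
  Runit :: "'o \<Rightarrow> 'a"
  Sym :: "'o \<Rightarrow> 'o \<Rightarrow> 'a"

definition hom :: "('o, 'a) smcat \<Rightarrow> 'o \<Rightarrow> 'o \<Rightarrow> 'a set" where
  "hom C X Y = {f \<in> Ar C. Dom C f = X \<and> Cod C f = Y}"

definition category :: "('o, 'a) smcat \<Rightarrow> bool" where
  "category C \<longleftrightarrow>
    (\<forall>f\<in>Ar C. Dom C f \<in> Ob C \<and> Cod C f \<in> Ob C) \<and>
    (\<forall>X\<in>Ob C. Idm C X \<in> hom C X X) \<and>
    (\<forall>f\<in>Ar C. \<forall>g\<in>Ar C. Cod C f = Dom C g \<longrightarrow> Cmp C g f \<in> hom C (Dom C f) (Cod C g)) \<and>
    (\<forall>f\<in>Ar C. Cmp C (Idm C (Cod C f)) f = f \<and> Cmp C f (Idm C (Dom C f)) = f) \<and>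
    (\<forall>f\<in>Ar C. \<forall>g\<in>Ar C. \<forall>h\<in>Ar C. Cod C f = Dom C g \<and> Cod C g = Dom C h \<longrightarrow>
        Cmp C h (Cmp C g f) = Cmp C (Cmp C h g) f)"

definition iso :: "('o, 'a) smcat \<Rightarrow> 'a \<Rightarrow> 'o \<Rightarrow> 'o \<Rightarrow> bool" where
  "iso C f X Y \<longleftrightarrow> f \<in> hom C X Y \<and>
     (\<exists>g\<in>hom C Y X. Cmp C g f = Idm C X \<and> Cmp C f g = Idm C Y)"

definition monoidal_category :: "('o, 'a) smcat \<Rightarrow> bool" where
  "monoidal_category C \<longleftrightarrow> category C \<and> Unit C \<in> Ob C \<and>
    \<comment> \<open>tensor is a bifunctor\<close>
    (\<forall>X\<in>Ob C. \<forall>Y\<in>Ob C. Tob C X Y \<in> Ob C) \<and>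
    (\<forall>f\<in>Ar C. \<forall>g\<in>Ar C. Tar C f g \<in> hom C (Tob C (Dom C f) (Dom C g)) (Tob C (Cod C f) (Cod C g))) \<and>
    (\<forall>X\<in>Ob C. \<forall>Y\<in>Ob C. Tar C (Idm C X) (Idm C Y) = Idm C (Tob C X Y)) \<and>
    (\<forall>f\<in>Ar C. \<forall>f'\<in>Ar C. \<forall>g\<in>Ar C. \<forall>g'\<in>Ar C. Cod C f = Dom C g \<and> Cod C f' = Dom C g' \<longrightarrow>
        Tar C (Cmp C g f) (Cmp C g' f') = Cmp C (Tar C g g') (Tar C f f')) \<and>
    \<comment> \<open>associator: natural isomorphism (X\<otimes>Y)\<otimes>Z \<rightarrow> X\<otimes>(Y\<otimes>Z)\<close>
    (\<forall>X\<in>Ob C. \<forall>Y\<in>Ob C. \<forall>Z\<in>Ob C.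
        iso C (Assoc C X Y Z) (Tob C (Tob C X Y) Z) (Tob C X (Tob C Y Z))) \<and>
    (\<forall>f\<in>Ar C. \<forall>g\<in>Ar C. \<forall>h\<in>Ar C.
        Cmp C (Assoc C (Cod C f) (Cod C g) (Cod C h)) (Tar C (Tar C f g) h) =
        Cmp C (Tar C f (Tar C g h)) (Assoc C (Dom C f) (Dom C g) (Dom C h))) \<and>
    \<comment> \<open>left unitor I\<otimes>X \<rightarrow> X\<close>
    (\<forall>X\<in>Ob C. iso C (Lunit C X) (Tob C (Unit C) X) X) \<and>
    (\<forall>f\<in>Ar C. Cmp C (Lunit C (Cod C f)) (Tar C (Idm C (Unit C)) f) = Cmp C f (Lunit C (Dom C f))) \<and>
    \<comment> \<open>right unitor X\<otimes>I \<rightarrow> X\<close>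
    (\<forall>X\<in>Ob C. iso C (Runit C X) (Tob C X (Unit C)) X) \<and>
    (\<forall>f\<in>Ar C. Cmp C (Runit C (Cod C f)) (Tar C f (Idm C (Unit C))) = Cmp C f (Runit C (Dom C f))) \<and>
    \<comment> \<open>pentagon\<close>
    (\<forall>W\<in>Ob C. \<forall>X\<in>Ob C. \<forall>Y\<in>Ob C. \<forall>Z\<in>Ob C.
        Cmp C (Assoc C W X (Tob C Y Z)) (Assoc C (Tob C W X) Y Z) =
        Cmp C (Tar C (Idm C W) (Assoc C X Y Z))
          (Cmp C (Assoc C W (Tob C X Y) Z) (Tar C (Assoc C W X Y) (Idm C Z)))) \<and>
    \<comment> \<open>triangle\<close>
    (\<forall>X\<in>Ob C. \<forall>Y\<in>Ob C.
        Cmp C (Tar C (Idm C X) (Lunit C Y)) (Assoc C X (Unit C) Y) = Tar C (Runit C X) (Idm C Y))"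

definition symmetric_monoidal_category :: "('o, 'a) smcat \<Rightarrow> bool" where
  "symmetric_monoidal_category C \<longleftrightarrow> monoidal_category C \<and>
    (\<forall>X\<in>Ob C. \<forall>Y\<in>Ob C. Sym C X Y \<in> hom C (Tob C X Y) (Tob C Y X)) \<and>
    (\<forall>f\<in>Ar C. \<forall>g\<in>Ar C.
        Cmp C (Sym C (Cod C f) (Cod C g)) (Tar C f g) = Cmp C (Tar C g f) (Sym C (Dom C f) (Dom C g))) \<and>
    (\<forall>X\<in>Ob C. \<forall>Y\<in>Ob C. Cmp C (Sym C Y X) (Sym C X Y) = Idm C (Tob C X Y)) \<and>
    \<comment> \<open>hexagon\<close>
    (\<forall>X\<in>Ob C. \<forall>Y\<in>Ob C. \<forall>Z\<in>Ob C.
        Cmp C (Assoc C Y Z X) (Cmp C (Sym C X (Tob C Y Z)) (Assoc C X Y Z)) =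
        Cmp C (Tar C (Idm C Y) (Sym C X Z)) (Cmp C (Assoc C Y X Z) (Tar C (Sym C X Y) (Idm C Z))))"

definition endofunctor :: "('o, 'a) smcat \<Rightarrow> ('o \<Rightarrow> 'o) \<Rightarrow> ('a \<Rightarrow> 'a) \<Rightarrow> bool" where
  "endofunctor C Mo Ma \<longleftrightarrow>
    (\<forall>X\<in>Ob C. Mo X \<in> Ob C) \<and>
    (\<forall>f\<in>Ar C. Ma f \<in> hom C (Mo (Dom C f)) (Mo (Cod C f))) \<and>
    (\<forall>X\<in>Ob C. Ma (Idm C X) = Idm C (Mo X)) \<and>
    (\<forall>f\<in>Ar C. \<forall>g\<in>Ar C. Cod C f = Dom C g \<longrightarrow> Ma (Cmp C g f) = Cmp C (Ma g) (Ma f))"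

definition monad :: "('o, 'a) smcat \<Rightarrow> ('o \<Rightarrow> 'o) \<Rightarrow> ('a \<Rightarrow> 'a) \<Rightarrow> ('o \<Rightarrow> 'a) \<Rightarrow> ('o \<Rightarrow> 'a) \<Rightarrow> bool" where
  "monad C Mo Ma eta mu \<longleftrightarrow> endofunctor C Mo Ma \<and>
    (\<forall>X\<in>Ob C. eta X \<in> hom C X (Mo X)) \<and>
    (\<forall>X\<in>Ob C. mu X \<in> hom C (Mo (Mo X)) (Mo X)) \<and>
    (\<forall>f\<in>Ar C. Cmp C (Ma f) (eta (Dom C f)) = Cmp C (eta (Cod C f)) f) \<and>
    (\<forall>f\<in>Ar C. Cmp C (Ma f) (mu (Dom C f)) = Cmp C (mu (Cod C f)) (Ma (Ma f))) \<and>
    (\<forall>X\<in>Ob C. Cmp C (mu X) (Ma (mu X)) = Cmp C (mu X) (mu (Mo X))) \<and>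
    (\<forall>X\<in>Ob C. Cmp C (mu X) (eta (Mo X)) = Idm C (Mo X)) \<and>
    (\<forall>X\<in>Ob C. Cmp C (mu X) (Ma (eta X)) = Idm C (Mo X))"

definition strong_monad ::
  "('o, 'a) smcat \<Rightarrow> ('o \<Rightarrow> 'o) \<Rightarrow> ('a \<Rightarrow> 'a) \<Rightarrow> ('o \<Rightarrow> 'a) \<Rightarrow> ('o \<Rightarrow> 'a) \<Rightarrow> ('o \<Rightarrow> 'o \<Rightarrow> 'a) \<Rightarrow> bool" where
  "strong_monad C Mo Ma eta mu tau \<longleftrightarrow> monad C Mo Ma eta mu \<and>
    (\<forall>X\<in>Ob C. \<forall>Y\<in>Ob C. tau X Y \<in> hom C (Tob C (Mo X) Y) (Mo (Tob C X Y))) \<and>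
    \<comment> \<open>naturality in both arguments\<close>
    (\<forall>f\<in>Ar C. \<forall>g\<in>Ar C.
        Cmp C (tau (Cod C f) (Cod C g)) (Tar C (Ma f) g) = Cmp C (Ma (Tar C f g)) (tau (Dom C f) (Dom C g))) \<and>
    \<comment> \<open>unit-object law\<close>
    (\<forall>X\<in>Ob C. Cmp C (Ma (Runit C X)) (tau X (Unit C)) = Runit C (Mo X)) \<and>
    \<comment> \<open>associativity law\<close>
    (\<forall>X\<in>Ob C. \<forall>Y\<in>Ob C. \<forall>Z\<in>Ob C.
        Cmp C (tau X (Tob C Y Z)) (Assoc C (Mo X) Y Z) =
        Cmp C (Ma (Assoc C X Y Z)) (Cmp C (tau (Tob C X Y) Z) (Tar C (tau X Y) (Idm C Z)))) \<and>
    \<comment> \<open>compatibility with the unit\<close>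
    (\<forall>X\<in>Ob C. \<forall>Y\<in>Ob C. Cmp C (tau X Y) (Tar C (eta X) (Idm C Y)) = eta (Tob C X Y)) \<and>
    \<comment> \<open>compatibility with the multiplication\<close>
    (\<forall>X\<in>Ob C. \<forall>Y\<in>Ob C.
        Cmp C (tau X Y) (Tar C (mu X) (Idm C Y)) =
        Cmp C (mu (Tob C X Y)) (Cmp C (Ma (tau X Y)) (tau (Mo X) Y)))"

definition lstrength ::
  "('o, 'a) smcat \<Rightarrow> ('o \<Rightarrow> 'o) \<Rightarrow> ('a \<Rightarrow> 'a) \<Rightarrow> ('o \<Rightarrow> 'o \<Rightarrow> 'a) \<Rightarrow> 'o \<Rightarrow> 'o \<Rightarrow> 'a" where
  "lstrength C Mo Ma tau X Y = Cmp C (Ma (Sym C Y X)) (Cmp C (tau Y X) (Sym C X (Mo Y)))"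

definition commutative_monad ::
  "('o, 'a) smcat \<Rightarrow> ('o \<Rightarrow> 'o) \<Rightarrow> ('a \<Rightarrow> 'a) \<Rightarrow> ('o \<Rightarrow> 'a) \<Rightarrow> ('o \<Rightarrow> 'a) \<Rightarrow> ('o \<Rightarrow> 'o \<Rightarrow> 'a) \<Rightarrow> bool" where
  "commutative_monad C Mo Ma eta mu tau \<longleftrightarrow> strong_monad C Mo Ma eta mu tau \<and>
    (\<forall>X\<in>Ob C. \<forall>Y\<in>Ob C.
        Cmp C (mu (Tob C X Y)) (Cmp C (Ma (tau X Y)) (lstrength C Mo Ma tau (Mo X) Y)) =
        Cmp C (mu (Tob C X Y)) (Cmp C (Ma (lstrength C Mo Ma tau X Y)) (tau X (Mo Y))))"

definition em_algebra ::
  "('o, 'a) smcat \<Rightarrow> ('o \<Rightarrow> 'o) \<Rightarrow> ('a \<Rightarrow> 'a) \<Rightarrow> ('o \<Rightarrow> 'a) \<Rightarrow> ('o \<Rightarrow> 'a) \<Rightarrow> 'o \<Rightarrow> 'a \<Rightarrow> bool" where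
  "em_algebra C Mo Ma eta mu A a \<longleftrightarrow> A \<in> Ob C \<and> a \<in> hom C (Mo A) A \<and>
    Cmp C a (eta A) = Idm C A \<and>
    Cmp C a (Ma a) = Cmp C a (mu A)"

definition monoid_obj :: "('o, 'a) smcat \<Rightarrow> 'o \<Rightarrow> 'a \<Rightarrow> 'a \<Rightarrow> bool" where
  "monoid_obj C A m u \<longleftrightarrow> A \<in> Ob C \<and> m \<in> hom C (Tob C A A) A \<and> u \<in> hom C (Unit C) A \<and>
    Cmp C m (Tar C m (Idm C A)) = Cmp C m (Cmp C (Tar C (Idm C A) m) (Assoc C A A A)) \<and>
    Cmp C m (Tar C u (Idm C A)) = Lunit C A \<and>
    Cmp C m (Tar C (Idm C A) u) = Runit C A"

definition sym_em_monoid ::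
  "('o, 'a) smcat \<Rightarrow> ('o \<Rightarrow> 'o) \<Rightarrow> ('a \<Rightarrow> 'a) \<Rightarrow> ('o \<Rightarrow> 'a) \<Rightarrow> ('o \<Rightarrow> 'a) \<Rightarrow> ('o \<Rightarrow> 'o \<Rightarrow> 'a)
    \<Rightarrow> 'o \<Rightarrow> 'a \<Rightarrow> 'a \<Rightarrow> 'a \<Rightarrow> bool" where
  "sym_em_monoid C Mo Ma eta mu tau A a m u \<longleftrightarrow>
    em_algebra C Mo Ma eta mu A a \<and> monoid_obj C A m u \<and>
    Cmp C a (Cmp C (Ma m) (Cmp C (mu (Tob C A A))
       (Cmp C (Ma (lstrength C Mo Ma tau A A)) (tau A (Mo A))))) =
    Cmp C m (Tar C a a)"

definition em_monoid ::
  "('o, 'a) smcat \<Rightarrow> ('o \<Rightarrow> 'o) \<Rightarrow> ('a \<Rightarrow> 'a) \<Rightarrow> ('o \<Rightarrow> 'a) \<Rightarrow> ('o \<Rightarrow> 'a) \<Rightarrow> ('o \<Rightarrow> 'o \<Rightarrow> 'a)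
    \<Rightarrow> 'o \<Rightarrow> 'a \<Rightarrow> 'a \<Rightarrow> 'a \<Rightarrow> bool" where
  "em_monoid C Mo Ma eta mu tau A a m u \<longleftrightarrow>
    em_algebra C Mo Ma eta mu A a \<and> monoid_obj C A m u \<and>
    Cmp C m (Tar C a (Idm C A)) = Cmp C a (Cmp C (Ma m) (tau A A))"

end

theory Submission
  imports Defs
begin

text \<open>Precompose the defining law of a symmetric Eilenberg--Moore monoid with
\<open>id \<otimes> \<eta>\<close>. On the right, \<open>m \<circ> (a \<otimes> a) \<circ> (id \<otimes> \<eta>) = m \<circ> (a \<otimes> id)\<close> by the unit law of the
algebra. On the left, the double strength \<open>\<mu> \<circ> M\<tau>' \<circ> \<tau>\<close> restricted along \<open>id \<otimes> \<eta>\<close> is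
just \<open>\<tau>\<close>, because the left strength is compatible with the unit.\<close>

lemma cat_comp_hom:
  assumes "category C" "f \<in> hom C X Y" "g \<in> hom C Y Z"
  shows "Cmp C g f \<in> hom C X Z"
  using assms unfolding category_def hom_def by auto

lemma cat_comp_assoc:
  assumes "category C" "f \<in> hom C X Y" "g \<in> hom C Y Z" "h \<in> hom C Z W"
  shows "Cmp C h (Cmp C g f) = Cmp C (Cmp C h g) f"
  using assms unfolding category_def hom_def by auto

lemma cat_id_comp:
  assumes "category C" "f \<in> hom C X Y"
  shows "Cmp C (Idm C Y) f = f"
  using assms unfolding category_def hom_def by auto

lemma cat_comp_id:
  assumes "category C" "f \<in> hom C X Y"
  shows "Cmp C f (Idm C X) = f"
  using assms unfolding category_def hom_def by auto

lemma cat_id_hom: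
  assumes "category C" "X \<in> Ob C"
  shows "Idm C X \<in> hom C X X"
  using assms unfolding category_def by auto

locale strong_monad_on_smc =
  fixes C :: "('o, 'a) smcat"
    and Mo :: "'o \<Rightarrow> 'o" and Ma :: "'a \<Rightarrow> 'a"
    and eta mu :: "'o \<Rightarrow> 'a" and tau :: "'o \<Rightarrow> 'o \<Rightarrow> 'a"
  assumes smc: "symmetric_monoidal_category C"
    and strong: "strong_monad C Mo Ma eta mu tau"
begin

lemma monoidal: "monoidal_category C"
  using smc unfolding symmetric_monoidal_category_def by auto

lemma cat: "category C"
  using monoidal unfolding monoidal_category_def by auto

lemma monad: "monad C Mo Ma eta mu"
  using strong unfolding strong_monad_def by auto

lemma endofunctor: "endofunctor C Mo Ma"
  using monad unfolding monad_def by auto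

lemma Tob_ob: "X \<in> Ob C \<Longrightarrow> Y \<in> Ob C \<Longrightarrow> Tob C X Y \<in> Ob C"
  using monoidal unfolding monoidal_category_def by auto

lemma Tar_hom:
  "f \<in> hom C X Y \<Longrightarrow> g \<in> hom C X' Y' \<Longrightarrow> Tar C f g \<in> hom C (Tob C X X') (Tob C Y Y')"
  using monoidal unfolding monoidal_category_def hom_def by auto

lemma Tar_comp:
  assumes "f \<in> hom C X Y" "g \<in> hom C Y Z" "f' \<in> hom C X' Y'" "g' \<in> hom C Y' Z'"
  shows "Tar C (Cmp C g f) (Cmp C g' f') = Cmp C (Tar C g g') (Tar C f f')"
  using assms monoidal unfolding monoidal_category_def hom_def by auto

lemma Mo_ob: "X \<in> Ob C \<Longrightarrow> Mo X \<in> Ob C"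
  using endofunctor unfolding endofunctor_def by auto

lemma Ma_hom: "f \<in> hom C X Y \<Longrightarrow> Ma f \<in> hom C (Mo X) (Mo Y)"
  using endofunctor unfolding endofunctor_def hom_def by auto

lemma Ma_id: "X \<in> Ob C \<Longrightarrow> Ma (Idm C X) = Idm C (Mo X)"
  using endofunctor unfolding endofunctor_def by auto

lemma Ma_comp: "f \<in> hom C X Y \<Longrightarrow> g \<in> hom C Y Z \<Longrightarrow> Ma (Cmp C g f) = Cmp C (Ma g) (Ma f)"
  using endofunctor unfolding endofunctor_def hom_def by auto

lemma eta_hom: "X \<in> Ob C \<Longrightarrow> eta X \<in> hom C X (Mo X)"
  using monad unfolding monad_def by auto

lemma eta_natural: "f \<in> hom C X Y \<Longrightarrow> Cmp C (Ma f) (eta X) = Cmp C (eta Y) f"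
  using monad unfolding monad_def hom_def by auto

lemma mu_hom: "X \<in> Ob C \<Longrightarrow> mu X \<in> hom C (Mo (Mo X)) (Mo X)"
  using monad unfolding monad_def by auto

lemma mu_Ma_eta: "X \<in> Ob C \<Longrightarrow> Cmp C (mu X) (Ma (eta X)) = Idm C (Mo X)"
  using monad unfolding monad_def by auto

lemma tau_hom: "X \<in> Ob C \<Longrightarrow> Y \<in> Ob C \<Longrightarrow> tau X Y \<in> hom C (Tob C (Mo X) Y) (Mo (Tob C X Y))"
  using strong unfolding strong_monad_def by auto

lemma tau_natural:
  "f \<in> hom C X Y \<Longrightarrow> g \<in> hom C X' Y' \<Longrightarrow>
    Cmp C (tau Y Y') (Tar C (Ma f) g) = Cmp C (Ma (Tar C f g)) (tau X X')"
  using strong unfolding strong_monad_def hom_def by auto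

lemma tau_eta:
  "X \<in> Ob C \<Longrightarrow> Y \<in> Ob C \<Longrightarrow> Cmp C (tau X Y) (Tar C (eta X) (Idm C Y)) = eta (Tob C X Y)"
  using strong unfolding strong_monad_def by auto

lemma Sym_hom: "X \<in> Ob C \<Longrightarrow> Y \<in> Ob C \<Longrightarrow> Sym C X Y \<in> hom C (Tob C X Y) (Tob C Y X)"
  using smc unfolding symmetric_monoidal_category_def by auto

lemma Sym_natural:
  "f \<in> hom C X Y \<Longrightarrow> g \<in> hom C X' Y' \<Longrightarrow>
    Cmp C (Sym C Y Y') (Tar C f g) = Cmp C (Tar C g f) (Sym C X X')"
  using smc unfolding symmetric_monoidal_category_def hom_def by auto

lemma Sym_Sym: "X \<in> Ob C \<Longrightarrow> Y \<in> Ob C \<Longrightarrow> Cmp C (Sym C Y X) (Sym C X Y) = Idm C (Tob C X Y)"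
  using smc unfolding symmetric_monoidal_category_def by auto

lemma lstrength_hom:
  assumes "X \<in> Ob C" "Y \<in> Ob C"
  shows "lstrength C Mo Ma tau X Y \<in> hom C (Tob C X (Mo Y)) (Mo (Tob C X Y))"
  unfolding lstrength_def
  using assms by (meson Ma_hom Mo_ob Sym_hom cat cat_comp_hom tau_hom)

lemma lstrength_eta:
  assumes X: "X \<in> Ob C" and Y: "Y \<in> Ob C"
  shows "Cmp C (lstrength C Mo Ma tau X Y) (Tar C (Idm C X) (eta Y)) = eta (Tob C X Y)"
proof -
  have XY: "Tob C X Y \<in> Ob C" and YX: "Tob C Y X \<in> Ob C" using Tob_ob X Y by auto
  have s1: "Sym C X (Mo Y) \<in> hom C (Tob C X (Mo Y)) (Tob C (Mo Y) X)"
    using Sym_hom X Y Mo_ob by auto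
  have sXY: "Sym C X Y \<in> hom C (Tob C X Y) (Tob C Y X)" using Sym_hom X Y by auto
  have sYX: "Sym C Y X \<in> hom C (Tob C Y X) (Tob C X Y)" using Sym_hom X Y by auto
  have t: "tau Y X \<in> hom C (Tob C (Mo Y) X) (Mo (Tob C Y X))" using tau_hom X Y by auto
  have Ms: "Ma (Sym C Y X) \<in> hom C (Mo (Tob C Y X)) (Mo (Tob C X Y))" using Ma_hom sYX by auto
  have ie: "Tar C (Idm C X) (eta Y) \<in> hom C (Tob C X Y) (Tob C X (Mo Y))"
    using Tar_hom cat_id_hom[OF cat X] eta_hom[OF Y] by auto
  have ei: "Tar C (eta Y) (Idm C X) \<in> hom C (Tob C Y X) (Tob C (Mo Y) X)"
    using Tar_hom cat_id_hom[OF cat X] eta_hom[OF Y] by auto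
  have "Cmp C (lstrength C Mo Ma tau X Y) (Tar C (Idm C X) (eta Y))
      = Cmp C (Ma (Sym C Y X)) (Cmp C (tau Y X) (Cmp C (Sym C X (Mo Y)) (Tar C (Idm C X) (eta Y))))"
    unfolding lstrength_def by (metis cat_comp_assoc[OF cat] s1 t Ms ie cat_comp_hom[OF cat])
  also have "Cmp C (Sym C X (Mo Y)) (Tar C (Idm C X) (eta Y))
      = Cmp C (Tar C (eta Y) (Idm C X)) (Sym C X Y)"
    using Sym_natural[OF cat_id_hom[OF cat X] eta_hom[OF Y]] .
  also have "Cmp C (tau Y X) (Cmp C (Tar C (eta Y) (Idm C X)) (Sym C X Y))
      = Cmp C (eta (Tob C Y X)) (Sym C X Y)"
    using cat_comp_assoc[OF cat sXY ei t] tau_eta[OF Y X] by simp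
  also have "Cmp C (Ma (Sym C Y X)) (Cmp C (eta (Tob C Y X)) (Sym C X Y))
      = Cmp C (eta (Tob C X Y)) (Cmp C (Sym C Y X) (Sym C X Y))"
    using cat_comp_assoc[OF cat sXY eta_hom[OF YX] Ms] eta_natural[OF sYX]
      cat_comp_assoc[OF cat sXY sYX eta_hom[OF XY]] by simp
  also have "\<dots> = eta (Tob C X Y)"
    using Sym_Sym[OF X Y] cat_comp_id[OF cat eta_hom[OF XY]] by simp
  finally show ?thesis .
qed

lemma double_strength_Tar_eta:
  assumes X: "X \<in> Ob C" and Y: "Y \<in> Ob C"
  shows "Cmp C (Cmp C (mu (Tob C X Y)) (Cmp C (Ma (lstrength C Mo Ma tau X Y)) (tau X (Mo Y))))
           (Tar C (Idm C (Mo X)) (eta Y)) = tau X Y"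
proof -
  let ?ls = "lstrength C Mo Ma tau X Y" and ?j = "Tar C (Idm C (Mo X)) (eta Y)"
  have XY: "Tob C X Y \<in> Ob C" using Tob_ob X Y by auto
  have t: "tau X Y \<in> hom C (Tob C (Mo X) Y) (Mo (Tob C X Y))" using tau_hom X Y by auto
  have tM: "tau X (Mo Y) \<in> hom C (Tob C (Mo X) (Mo Y)) (Mo (Tob C X (Mo Y)))"
    using tau_hom X Y Mo_ob by auto
  have j: "?j \<in> hom C (Tob C (Mo X) Y) (Tob C (Mo X) (Mo Y))"
    using Tar_hom cat_id_hom[OF cat Mo_ob[OF X]] eta_hom[OF Y] by auto
  have ie: "Tar C (Idm C X) (eta Y) \<in> hom C (Tob C X Y) (Tob C X (Mo Y))"
    using Tar_hom cat_id_hom[OF cat X] eta_hom[OF Y] by auto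
  have Mie: "Ma (Tar C (Idm C X) (eta Y)) \<in> hom C (Mo (Tob C X Y)) (Mo (Tob C X (Mo Y)))"
    using Ma_hom ie by auto
  have Mls: "Ma ?ls \<in> hom C (Mo (Tob C X (Mo Y))) (Mo (Mo (Tob C X Y)))"
    using Ma_hom lstrength_hom X Y by auto
  have "Cmp C (Cmp C (mu (Tob C X Y)) (Cmp C (Ma ?ls) (tau X (Mo Y)))) ?j
      = Cmp C (mu (Tob C X Y)) (Cmp C (Ma ?ls) (Cmp C (tau X (Mo Y)) ?j))"
    using cat_comp_assoc[OF cat j cat_comp_hom[OF cat tM Mls] mu_hom[OF XY]]
      cat_comp_assoc[OF cat j tM Mls] by simp
  also have "Cmp C (tau X (Mo Y)) ?j = Cmp C (Ma (Tar C (Idm C X) (eta Y))) (tau X Y)"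
    using tau_natural[OF cat_id_hom[OF cat X] eta_hom[OF Y]] Ma_id[OF X] by simp
  also have "Cmp C (Ma ?ls) \<dots> = Cmp C (Ma (eta (Tob C X Y))) (tau X Y)"
    using cat_comp_assoc[OF cat t Mie Mls] Ma_comp[OF ie lstrength_hom[OF X Y]]
      lstrength_eta[OF X Y] by simp
  also have "Cmp C (mu (Tob C X Y)) \<dots> = tau X Y"
    using cat_comp_assoc[OF cat t Ma_hom[OF eta_hom[OF XY]] mu_hom[OF XY]] mu_Ma_eta[OF XY]
      cat_id_comp[OF cat t] by simp
  finally show ?thesis .
qed

end

theorem theorem18:
  fixes C :: "('o, 'a) smcat"
    and Mo :: "'o \<Rightarrow> 'o" and Ma :: "'a \<Rightarrow> 'a"
    and eta mu :: "'o \<Rightarrow> 'a" and tau :: "'o \<Rightarrow> 'o \<Rightarrow> 'a"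
    and A :: 'o and a m u :: 'a
  assumes "symmetric_monoidal_category C"
    and "commutative_monad C Mo Ma eta mu tau"
    and "sym_em_monoid C Mo Ma eta mu tau A a m u"
  shows "em_monoid C Mo Ma eta mu tau A a m u"
proof -
  interpret strong_monad_on_smc C Mo Ma eta mu tau
    using assms(1,2) by unfold_locales (auto simp: commutative_monad_def)
  have alg: "em_algebra C Mo Ma eta mu A a" and mon: "monoid_obj C A m u"
    and sym_law: "Cmp C a (Cmp C (Ma m) (Cmp C (mu (Tob C A A))
       (Cmp C (Ma (lstrength C Mo Ma tau A A)) (tau A (Mo A))))) = Cmp C m (Tar C a a)"
    using assms(3) unfolding sym_em_monoid_def by auto
  then have A: "A \<in> Ob C" and a: "a \<in> hom C (Mo A) A" and a_eta: "Cmp C a (eta A) = Idm C A"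
    and m: "m \<in> hom C (Tob C A A) A"
    unfolding em_algebra_def monoid_obj_def by auto
  let ?j = "Tar C (Idm C (Mo A)) (eta A)"
  let ?D = "Cmp C (mu (Tob C A A)) (Cmp C (Ma (lstrength C Mo Ma tau A A)) (tau A (Mo A)))"
  have j: "?j \<in> hom C (Tob C (Mo A) A) (Tob C (Mo A) (Mo A))"
    using Tar_hom cat_id_hom[OF cat Mo_ob[OF A]] eta_hom[OF A] by auto
  have D: "?D \<in> hom C (Tob C (Mo A) (Mo A)) (Mo (Tob C A A))"
    by (meson A Ma_hom Mo_ob Tob_ob cat cat_comp_hom lstrength_hom mu_hom tau_hom)
  have "Cmp C m (Tar C a (Idm C A)) = Cmp C (Cmp C m (Tar C a a)) ?j"
    using cat_comp_assoc[OF cat j Tar_hom[OF a a] m]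
      Tar_comp[OF cat_id_hom[OF cat Mo_ob[OF A]] a eta_hom[OF A] a] cat_comp_id[OF cat a] a_eta
    by simp
  also have "\<dots> = Cmp C (Cmp C a (Cmp C (Ma m) ?D)) ?j"
    using sym_law by simp
  also have "\<dots> = Cmp C a (Cmp C (Ma m) (Cmp C ?D ?j))"
    using cat_comp_assoc[OF cat j cat_comp_hom[OF cat D Ma_hom[OF m]] a]
      cat_comp_assoc[OF cat j D Ma_hom[OF m]] by simp
  also have "\<dots> = Cmp C a (Cmp C (Ma m) (tau A A))"
    using double_strength_Tar_eta[OF A A] by simp
  finally show ?thesis
    using alg mon unfolding em_monoid_def by auto
qed

end
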